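(* Let $w:\mathbb R^+\times\mathbb R\to\mathbb R^n$ and $f:\mathbb R^n\to\mathbb R^n$ (smooth) define the system of conservation laws $\partial_t w+\partial_x f(w)=0$, where $w=(w_1,w_2)$ with $w_1\in\mathbb R^l$, $w_2\in\mathbb R^{n-l}$, and $f=(0,f_2)$ with $f_2\in\mathbb R^{n-l}$. Assume that $\eta(w)$ is a (smooth) function which is strictly convex with respect to $w_2$ at fixed $w_1$ and such that $\partial_t\eta(w)=0$ for smooth solutions, and that $\nabla_{w_1}f_2(w)=0$. Then the system is hyperbolic.
   Context: Hyperbolic means that for every state $w$ the Jacobian matrix $\nabla_w f(w)$ is diagonalizable with real eigenvalues. *)

theory Defs
  imports "HOL-Analysis.Analysis"
begin

definition real_diagonalizable :: "real^'n^'n \<Rightarrow> bool" where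
  "real_diagonalizable A \<longleftrightarrow>
     (\<exists>P D::real^'n^'n. invertible P \<and> (\<forall>i j. i \<noteq> j \<longrightarrow> D $ i $ j = 0)
        \<and> matrix_inv P ** A ** P = D)"

definition hyperbolic :: "(real^'n \<Rightarrow> real^'n) \<Rightarrow> bool" where
  "hyperbolic f \<longleftrightarrow>
     (\<forall>w. f differentiable (at w) \<and>
          real_diagonalizable (matrix (frechet_derivative f (at w))))"

end

theory Submission
  imports Defs
begin

text \<open>Let \<open>g = \<nabla>\<eta>\<close> and \<open>H = \<nabla>\<^sup>2\<eta>\<close>. Differentiating the identity \<open>g(w) \<bullet> J(w) k = 0\<close> in a
  direction \<open>h\<close> gives \<open>H h \<bullet> J k + g \<bullet> D\<^sup>2f(h, k) = 0\<close>; as second derivatives are symmetric,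
  \<open>H h \<bullet> J k\<close> is symmetric in \<open>h\<close> and \<open>k\<close>. Since \<open>f\<^sub>1 = 0\<close> and \<open>f\<^sub>2\<close> does not depend on \<open>w\<^sub>1\<close>,
  the Jacobian \<open>J\<close> vanishes outside the \<open>w\<^sub>2\<close>-block, so \<open>J\<close> is self-adjoint for the inner product
  \<open>B(x, y) = x\<^sub>1 \<bullet> y\<^sub>1 + x\<^sub>2 \<bullet> H y\<^sub>2\<close>, which is positive definite by strict convexity of \<open>\<eta>\<close> in \<open>w\<^sub>2\<close>.
  A self-adjoint operator has a basis of eigenvectors: a maximizer of the Rayleigh quotient on
  an invariant subspace is an eigenvector, and its \<open>B\<close>-orthogonal complement is again invariant.\<close>

lemma has_derivative_increment_bound:
  fixes G :: "'a::real_normed_vector \<Rightarrow> 'b::real_normed_vector"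
  assumes dG: "(G has_derivative L) (at w)" and e: "e > 0"
  obtains d where "d > 0"
    and "\<And>y z. norm (y - w) < d \<Longrightarrow> norm (z - w) < d \<Longrightarrow>
           norm (G y - G z - L (y - z)) \<le> e * (norm (y - w) + norm (z - w))"
proof -
  interpret L: bounded_linear L using dG by (rule has_derivative_bounded_linear)
  obtain d where "d > 0" and rem: "\<And>y. norm (y - w) < d \<Longrightarrow> norm (G y - G w - L (y - w)) \<le> e * norm (y - w)"
    using dG e unfolding has_derivative_at_alt by blast
  moreover have "norm (G y - G z - L (y - z)) \<le> e * (norm (y - w) + norm (z - w))"
    if "norm (y - w) < d" "norm (z - w) < d" for y z
  proof -
    have "G y - G z - L (y - z) = (G y - G w - L (y - w)) - (G z - G w - L (z - w))"
      by (simp add: L.diff algebra_simps)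
    also have "norm \<dots> \<le> norm (G y - G w - L (y - w)) + norm (G z - G w - L (z - w))"
      by (rule norm_triangle_ineq4)
    also have "\<dots> \<le> e * (norm (y - w) + norm (z - w))"
      using rem[OF that(1)] rem[OF that(2)] by (simp add: distrib_left)
    finally show ?thesis .
  qed
  ultimately show ?thesis using that by blast
qed

definition second_difference :: "('a::real_vector \<Rightarrow> real) \<Rightarrow> 'a \<Rightarrow> 'a \<Rightarrow> 'a \<Rightarrow> real \<Rightarrow> real" where
  "second_difference F w u v t = F (w + t *\<^sub>R u + t *\<^sub>R v) - F (w + t *\<^sub>R u) - F (w + t *\<^sub>R v) + F w"

lemma second_difference_commute: "second_difference F w u v = second_difference F w v u"
  by (simp add: fun_eq_iff second_difference_def algebra_simps)

lemma second_difference_mean_value: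
  fixes F :: "'a::real_inner \<Rightarrow> real"
  assumes dF: "\<And>x. (F has_derivative (\<lambda>h. G x \<bullet> h)) (at x)" and t: "t > 0"
  obtains \<xi> where "0 < \<xi>" "\<xi> < t"
    and "second_difference F w u v t = t * ((G (w + \<xi> *\<^sub>R u + t *\<^sub>R v) - G (w + \<xi> *\<^sub>R u)) \<bullet> u)"
proof -
  define \<psi> where "\<psi> s = F (w + s *\<^sub>R u + t *\<^sub>R v) - F (w + s *\<^sub>R u)" for s
  define \<psi>' where "\<psi>' s = (G (w + s *\<^sub>R u + t *\<^sub>R v) - G (w + s *\<^sub>R u)) \<bullet> u" for s
  have "(\<psi> has_real_derivative \<psi>' s) (at s)" for s
  proof -
    have "((\<lambda>s. w + s *\<^sub>R u + t *\<^sub>R v) has_derivative (\<lambda>h. h *\<^sub>R u)) (at s)"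
      and "((\<lambda>s. w + s *\<^sub>R u) has_derivative (\<lambda>h. h *\<^sub>R u)) (at s)"
      by (auto intro!: derivative_eq_intros)
    from has_derivative_diff[OF has_derivative_compose[OF this(1) dF] has_derivative_compose[OF this(2) dF]]
    show ?thesis unfolding has_field_derivative_def \<psi>_def \<psi>'_def
      by (rule has_derivative_eq_rhs) (auto simp: fun_eq_iff algebra_simps inner_diff_left)
  qed
  then obtain \<xi> where "0 < \<xi>" "\<xi> < t" "\<psi> t - \<psi> 0 = (t - 0) * \<psi>' \<xi>"
    using MVT2[OF t, of \<psi> \<psi>'] by blast
  then show ?thesis
    using that unfolding \<psi>_def \<psi>'_def second_difference_def by (simp add: algebra_simps)
qed

lemma second_difference_estimate:
  fixes F :: "'a::real_inner \<Rightarrow> real"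
  assumes dF: "\<And>x. (F has_derivative (\<lambda>h. G x \<bullet> h)) (at x)" and L: "bounded_linear L"
    and increment: "\<And>y z. norm (y - w) < d \<Longrightarrow> norm (z - w) < d \<Longrightarrow>
      norm (G y - G z - L (y - z)) \<le> \<epsilon> * (norm (y - w) + norm (z - w))"
    and "\<epsilon> \<ge> 0" and t: "t > 0" "t * (norm u + norm v) < d"
  shows "\<bar>second_difference F w u v t / t\<^sup>2 - L v \<bullet> u\<bar> \<le> \<epsilon> * ((2 * norm u + norm v) * norm u)"
proof -
  interpret L: bounded_linear L by (rule L)
  obtain \<xi> where \<xi>: "0 < \<xi>" "\<xi> < t"
    and mvt: "second_difference F w u v t = t * ((G (w + \<xi> *\<^sub>R u + t *\<^sub>R v) - G (w + \<xi> *\<^sub>R u)) \<bullet> u)"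
    using second_difference_mean_value[OF dF t(1)] by blast
  define y z where "y = w + \<xi> *\<^sub>R u + t *\<^sub>R v" and "z = w + \<xi> *\<^sub>R u"
  have difference: "second_difference F w u v t = t * ((G y - G z) \<bullet> u)"
    unfolding mvt y_def z_def ..
  have y: "norm (y - w) \<le> t * (norm u + norm v)"
  proof -
    have "norm (y - w) \<le> \<xi> * norm u + t * norm v"
      unfolding y_def using \<xi> t norm_triangle_ineq[of "\<xi> *\<^sub>R u" "t *\<^sub>R v"] by simp
    also have "\<dots> \<le> t * (norm u + norm v)"
      using \<xi> by (simp add: distrib_left mult_right_mono)
    finally show ?thesis .
  qed
  have z: "norm (z - w) \<le> t * norm u"
    using \<xi> unfolding z_def by (simp add: mult_right_mono)
  have "t * norm u \<le> t * (norm u + norm v)"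
    using t by (simp add: mult_left_mono)
  then have "norm (G y - G z - L (t *\<^sub>R v)) \<le> \<epsilon> * (norm (y - w) + norm (z - w))"
    using increment[of y z] y z t(2) unfolding y_def z_def by simp
  also have "\<dots> \<le> \<epsilon> * (t * (2 * norm u + norm v))"
    using y z \<open>\<epsilon> \<ge> 0\<close> by (intro mult_left_mono) (simp_all add: algebra_simps)
  finally have "norm (G y - G z - L (t *\<^sub>R v)) * norm u \<le> \<epsilon> * (t * (2 * norm u + norm v)) * norm u"
    by (rule mult_right_mono) simp
  then have "\<bar>(G y - G z - L (t *\<^sub>R v)) \<bullet> u\<bar> / t \<le> \<epsilon> * ((2 * norm u + norm v) * norm u)"
    using Cauchy_Schwarz_ineq2[of "G y - G z - L (t *\<^sub>R v)" u] t(1)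
    by (simp add: pos_divide_le_eq algebra_simps)
  moreover have "second_difference F w u v t / t\<^sup>2 - L v \<bullet> u = (G y - G z - L (t *\<^sub>R v)) \<bullet> u / t"
    using t(1) unfolding difference L.scaleR
    by (simp add: power2_eq_square field_simps inner_diff_left inner_add_left)
  ultimately show ?thesis using t(1) by simp
qed

lemma second_difference_tendsto:
  fixes F :: "'a::real_inner \<Rightarrow> real"
  assumes dF: "\<And>x. (F has_derivative (\<lambda>h. G x \<bullet> h)) (at x)"
    and dG: "(G has_derivative L) (at w)"
  shows "((\<lambda>t. second_difference F w u v t / t\<^sup>2) \<longlongrightarrow> L v \<bullet> u) (at_right 0)"
proof (rule tendstoI)
  fix e :: real assume "e > 0"
  define C where "C = (2 * norm u + norm v) * norm u + 1"
  have "C > 0" unfolding C_def by (simp add: add_nonneg_pos)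
  obtain d where "d > 0" and increment: "\<And>y z. norm (y - w) < d \<Longrightarrow> norm (z - w) < d \<Longrightarrow>
      norm (G y - G z - L (y - z)) \<le> e / C * (norm (y - w) + norm (z - w))"
    using has_derivative_increment_bound[OF dG, of "e / C"] \<open>e > 0\<close> \<open>C > 0\<close> by auto
  define r where "r = d / (norm u + norm v + 1)"
  have "dist (second_difference F w u v t / t\<^sup>2) (L v \<bullet> u) < e" if t: "0 < t" "t < r" for t
  proof -
    have "t * (norm u + norm v + 1) < d"
      using t \<open>d > 0\<close> unfolding r_def by (simp add: pos_less_divide_eq add_nonneg_pos)
    then have "t * (norm u + norm v) < d"
      using t by (simp add: distrib_left)
    from second_difference_estimate[OF dF has_derivative_bounded_linear[OF dG] increment _ t(1) this]
    have "dist (second_difference F w u v t / t\<^sup>2) (L v \<bullet> u) \<le> e / C * (C - 1)"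
      using \<open>e > 0\<close> \<open>C > 0\<close> unfolding C_def by (simp add: dist_real_def)
    also have "\<dots> < e"
      using \<open>e > 0\<close> \<open>C > 0\<close> by (simp add: field_simps)
    finally show ?thesis .
  qed
  moreover have "r > 0" unfolding r_def using \<open>d > 0\<close> by (simp add: add_nonneg_pos)
  ultimately show "\<forall>\<^sub>F t in at_right 0. dist (second_difference F w u v t / t\<^sup>2) (L v \<bullet> u) < e"
    unfolding eventually_at_right_field by auto
qed

lemma gradient_derivative_symmetric:
  fixes F :: "'a::real_inner \<Rightarrow> real"
  assumes dF: "\<And>x. (F has_derivative (\<lambda>h. G x \<bullet> h)) (at x)"
    and dG: "(G has_derivative L) (at w)"
  shows "L u \<bullet> v = L v \<bullet> u"
proof -
  have "((\<lambda>t. second_difference F w u v t / t\<^sup>2) \<longlongrightarrow> L u \<bullet> v) (at_right 0)"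
    using second_difference_tendsto[OF dF dG, of v u] by (simp add: second_difference_commute)
  from tendsto_unique[OF trivial_limit_at_right_real this second_difference_tendsto[OF dF dG]]
  show ?thesis .
qed

lemma jacobian_row_zero:
  fixes f :: "real^'n \<Rightarrow> real^'m"
  assumes "(f has_derivative (\<lambda>h. J *v h)) (at w)" and "\<And>x. f x $ i = 0"
  shows "J $ i $ j = 0"
proof -
  have "((\<lambda>x. f x $ i) has_derivative (\<lambda>h. (J *v h) $ i)) (at w)"
    by (rule bounded_linear.has_derivative[OF bounded_linear_vec_nth assms(1)])
  moreover have "((\<lambda>x. f x $ i) has_derivative (\<lambda>h. 0)) (at w)"
    using assms(2) by simp
  ultimately have "(\<lambda>h. (J *v h) $ i) = (\<lambda>h. 0)"
    by (rule has_derivative_unique)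
  from fun_cong[OF this, of "axis j 1"] show ?thesis
    by (simp add: matrix_vector_mult_basis column_def)
qed

lemma bounded_linear_matrix_vector_mult_left: "bounded_linear (\<lambda>A::real^'n^'m. A *v x)"
  unfolding linear_conv_bounded_linear[symmetric]
  by (simp add: linear_iff matrix_vector_mult_add_rdistrib scaleR_matrix_vector_assoc)

lemma conservation_symmetrizes_jacobian:
  fixes f :: "real^'n \<Rightarrow> real^'n" and J :: "real^'n \<Rightarrow> real^'n^'n" and g :: "real^'n \<Rightarrow> real^'n"
  assumes f_deriv: "\<And>x. (f has_derivative (\<lambda>h. J x *v h)) (at x)"
    and J_diff: "J differentiable (at w)"
    and g_deriv: "(g has_derivative (\<lambda>h. H *v h)) (at w)"
    and conserved: "\<And>x h. g x \<bullet> (J x *v h) = 0"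
  shows "(H *v h) \<bullet> (J w *v k) = (H *v k) \<bullet> (J w *v h)"
proof -
  obtain DJ where DJ: "(J has_derivative DJ) (at w)"
    using J_diff unfolding differentiable_def by blast
  have row_symmetric: "DJ a $ i \<bullet> b = DJ b $ i \<bullet> a" for i a b
  proof -
    have "((\<lambda>x. f x $ i) has_derivative (\<lambda>h. J x $ i \<bullet> h)) (at x)" for x
      using bounded_linear.has_derivative[OF bounded_linear_vec_nth f_deriv]
      by (simp add: matrix_vector_mul_component)
    moreover have "((\<lambda>x. J x $ i) has_derivative (\<lambda>h. DJ h $ i)) (at w)"
      by (rule bounded_linear.has_derivative[OF bounded_linear_vec_nth DJ])
    ultimately show ?thesis by (rule gradient_derivative_symmetric)
  qed
  have derivative_zero: "g w \<bullet> (DJ a *v b) + (H *v a) \<bullet> (J w *v b) = 0" for a b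
  proof -
    have "((\<lambda>x. g x \<bullet> (J x *v b)) has_derivative
        (\<lambda>h. g w \<bullet> (DJ h *v b) + (H *v h) \<bullet> (J w *v b))) (at w)"
      by (intro has_derivative_inner g_deriv
          bounded_linear.has_derivative[OF bounded_linear_matrix_vector_mult_left DJ])
    moreover have "((\<lambda>x. g x \<bullet> (J x *v b)) has_derivative (\<lambda>h. 0)) (at w)"
      by (simp add: conserved)
    ultimately have "(\<lambda>h. g w \<bullet> (DJ h *v b) + (H *v h) \<bullet> (J w *v b)) = (\<lambda>h. 0)"
      by (rule has_derivative_unique)
    then show ?thesis by (rule fun_cong)
  qed
  have "DJ h *v k = DJ k *v h"
    unfolding vec_eq_iff matrix_vector_mul_component using row_symmetric by blast
  then show ?thesis
    using derivative_zero[of h k] derivative_zero[of k h] by simp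
qed

lemma linear_coeff_zero_if_quadratic_nonpos:
  fixes a b :: real
  assumes "\<And>t. 2 * t * a + t\<^sup>2 * b \<le> 0"
  shows "a = 0"
proof (rule ccontr)
  assume "a \<noteq> 0"
  define c where "c = \<bar>b\<bar> + 1"
  define t where "t = a / c"
  have "c > 0" unfolding c_def by (simp add: add_nonneg_pos)
  have "t * a > 0"
    using \<open>a \<noteq> 0\<close> \<open>c > 0\<close> unfolding t_def by (simp add: power2_eq_square[symmetric])
  moreover have "t\<^sup>2 * c = t * a"
    using \<open>c > 0\<close> unfolding t_def by (simp add: power2_eq_square)
  moreover have "- (t\<^sup>2 * \<bar>b\<bar>) \<le> t\<^sup>2 * b"
    using mult_left_mono[OF abs_ge_minus_self[of b] zero_le_power2[of t]] by simp
  moreover have "t\<^sup>2 * c = t\<^sup>2 * \<bar>b\<bar> + t\<^sup>2"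
    unfolding c_def by (simp add: distrib_left)
  ultimately have "2 * t * a + t\<^sup>2 * b > 0"
    using zero_le_power2[of t] by linarith
  with assms[of t] show False by simp
qed

context
  fixes B :: "'a::euclidean_space \<Rightarrow> 'a \<Rightarrow> real" and A :: "'a \<Rightarrow> 'a"
  assumes B_bilinear: "bilinear B"
    and B_symmetric: "\<And>x y. B x y = B y x"
    and B_pos: "\<And>x. x \<noteq> 0 \<Longrightarrow> B x x > 0"
    and A_linear: "linear A"
    and A_self_adjoint: "\<And>x y. B x (A y) = B (A x) y"
begin

lemma continuous_on_rayleigh_quotient: "continuous_on (- {0}) (\<lambda>x. B x (A x) / B x x)"
proof -
  have "bounded_linear A"
    using A_linear by (simp add: linear_conv_bounded_linear)
  then have "continuous_on (- {0}) (\<lambda>x. B x (A x))"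
    by (rule bilinear_continuous_on_compose[OF continuous_on_id linear_continuous_on B_bilinear])
  moreover have "continuous_on (- {0}) (\<lambda>x. B x x)"
    by (rule bilinear_continuous_on_compose[OF continuous_on_id continuous_on_id B_bilinear])
  ultimately show ?thesis
    using B_pos by (intro continuous_on_divide) force+
qed

lemma rayleigh_quotient_maximizer:
  assumes S: "subspace S" and "S \<noteq> {0}"
  obtains x l where "x \<in> S" "x \<noteq> 0" "B x (A x) = l * B x x"
    and "\<And>y. y \<in> S \<Longrightarrow> B y (A y) \<le> l * B y y"
proof -
  define R where "R x = B x (A x) / B x x" for x
  define T where "T = sphere 0 1 \<inter> S"
  have R_scale: "R (c *\<^sub>R y) = R y" if "c \<noteq> 0" for c y
    using that unfolding R_def
    by (simp add: bilinear_lmul[OF B_bilinear] bilinear_rmul[OF B_bilinear] linear_scale[OF A_linear])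
  have normalize: "(1 / norm y) *\<^sub>R y \<in> T" if "y \<in> S" "y \<noteq> 0" for y
    using that S unfolding T_def by (simp add: subspace_scale)
  obtain y where "y \<in> S" "y \<noteq> 0"
    using \<open>S \<noteq> {0}\<close> S subspace_0 by blast
  then have "T \<noteq> {}" using normalize by blast
  have "compact T"
    unfolding T_def by (intro compact_Int_closed compact_sphere closed_subspace S)
  have "continuous_on T R"
    unfolding R_def T_def
    by (rule continuous_on_subset[OF continuous_on_rayleigh_quotient]) auto
  obtain x where "x \<in> T" and x_max: "\<And>y. y \<in> T \<Longrightarrow> R y \<le> R x"
    using continuous_attains_sup[OF \<open>compact T\<close> \<open>T \<noteq> {}\<close> \<open>continuous_on T R\<close>] by blast
  then have "x \<in> S" "x \<noteq> 0" unfolding T_def by auto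
  moreover have "B x (A x) = R x * B x x"
    using B_pos[OF \<open>x \<noteq> 0\<close>] unfolding R_def by simp
  moreover have "B y (A y) \<le> R x * B y y" if "y \<in> S" for y
  proof (cases "y = 0")
    case True
    then show ?thesis by (simp add: bilinear_lzero[OF B_bilinear])
  next
    case False
    then have "R y \<le> R x"
      using x_max[OF normalize[OF that False]] R_scale[of "1 / norm y" y] by simp
    then show ?thesis
      using B_pos[OF False] unfolding R_def by (simp add: pos_divide_le_eq)
  qed
  ultimately show ?thesis using that by blast
qed

lemma rayleigh_maximizer_eigenvector:
  assumes S: "subspace S" and invariant: "\<And>y. y \<in> S \<Longrightarrow> A y \<in> S" and "x \<in> S"
    and x_value: "B x (A x) = l * B x x"
    and x_max: "\<And>y. y \<in> S \<Longrightarrow> B y (A y) \<le> l * B y y"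
  shows "A x = l *\<^sub>R x"
proof -
  note bilinear_simps = bilinear_ladd[OF B_bilinear] bilinear_radd[OF B_bilinear]
    bilinear_lmul[OF B_bilinear] bilinear_rmul[OF B_bilinear]
    bilinear_lsub[OF B_bilinear] bilinear_rsub[OF B_bilinear]
    linear_add[OF A_linear] linear_scale[OF A_linear]
  have B_orthogonal: "B y (A x - l *\<^sub>R x) = 0" if "y \<in> S" for y
  proof (rule linear_coeff_zero_if_quadratic_nonpos)
    fix t :: real
    have "x + t *\<^sub>R y \<in> S"
      using S \<open>x \<in> S\<close> \<open>y \<in> S\<close> by (simp add: subspace_add subspace_scale)
    from x_max[OF this]
    have "B x (A x) + t * (B x (A y) + B y (A x)) + t\<^sup>2 * B y (A y)
        \<le> l * (B x x + t * (B x y + B y x) + t\<^sup>2 * B y y)"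
      by (simp add: bilinear_simps power2_eq_square algebra_simps)
    moreover have "B x (A y) = B y (A x)" "B x y = B y x"
      using A_self_adjoint B_symmetric by metis+
    ultimately show "2 * t * B y (A x - l *\<^sub>R x) + t\<^sup>2 * (B y (A y) - l * B y y) \<le> 0"
      using x_value by (simp add: bilinear_simps algebra_simps)
  qed
  have "A x - l *\<^sub>R x \<in> S"
    using S invariant \<open>x \<in> S\<close> by (simp add: subspace_diff subspace_scale)
  from B_orthogonal[OF this] show ?thesis
    using B_pos[of "A x - l *\<^sub>R x"] by auto
qed

lemma B_orthogonal_complement:
  assumes S: "subspace S" and x: "x \<in> S" "x \<noteq> 0"
  defines "S' \<equiv> {y \<in> S. B x y = 0}"
  shows "subspace S'" and "dim S' < dim S" and "S \<subseteq> span (insert x S')"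
proof -
  show "subspace S'"
    using S unfolding S'_def subspace_def
    by (simp add: bilinear_radd[OF B_bilinear] bilinear_rmul[OF B_bilinear] bilinear_rzero[OF B_bilinear])
  moreover have "x \<notin> S'"
    using B_pos[OF x(2)] unfolding S'_def by simp
  then have "S' \<subset> S"
    using x(1) unfolding S'_def by auto
  ultimately show "dim S' < dim S"
    using S by (intro dim_psubset) (simp add: span_eq_iff[THEN iffD2])
  show "S \<subseteq> span (insert x S')"
  proof
    fix y assume "y \<in> S"
    define k where "k = B x y / B x x"
    have "y - k *\<^sub>R x \<in> S'"
      using \<open>y \<in> S\<close> x S B_pos[OF x(2)] unfolding S'_def k_def
      by (simp add: subspace_diff subspace_scale bilinear_rsub[OF B_bilinear] bilinear_rmul[OF B_bilinear])
    then show "y \<in> span (insert x S')"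
      unfolding span_insert by (auto intro: span_base)
  qed
qed

lemma self_adjoint_eigenbasis:
  assumes "subspace S" and "\<And>x. x \<in> S \<Longrightarrow> A x \<in> S"
  shows "\<exists>E. E \<subseteq> S \<and> independent E \<and> span E = S \<and> (\<forall>e\<in>E. \<exists>l. A e = l *\<^sub>R e)"
  using assms
proof (induction "dim S" arbitrary: S rule: less_induct)
  case less
  show ?case
  proof (cases "S = {0}")
    case True
    then show ?thesis by (intro exI[of _ "{}"]) (auto simp: independent_empty)
  next
    case False
    obtain x l where x: "x \<in> S" "x \<noteq> 0" "B x (A x) = l * B x x"
      and x_max: "\<And>y. y \<in> S \<Longrightarrow> B y (A y) \<le> l * B y y"
      using rayleigh_quotient_maximizer[OF less.prems(1) False] by blast
    have "A x = l *\<^sub>R x"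
      using rayleigh_maximizer_eigenvector[OF less.prems x(1,3) x_max] .
    define S' where "S' = {y \<in> S. B x y = 0}"
    note complement = B_orthogonal_complement[OF less.prems(1) x(1,2), folded S'_def]
    have "A y \<in> S'" if "y \<in> S'" for y
      using that less.prems(2) A_self_adjoint[of x y] \<open>A x = l *\<^sub>R x\<close>
      unfolding S'_def by (simp add: bilinear_lmul[OF B_bilinear])
    then obtain E where E: "E \<subseteq> S'" "independent E" "span E = S'" "\<forall>e\<in>E. \<exists>l. A e = l *\<^sub>R e"
      using less.hyps[OF complement(2,1)] by blast
    have "span (insert x E) = S"
    proof
      show "span (insert x E) \<subseteq> S"
        using E(1) x(1) less.prems(1) unfolding S'_def by (intro span_minimal) auto
      show "S \<subseteq> span (insert x E)"
        using complement(3) E(3) span_eq_iff[THEN iffD2, OF complement(1)] by (simp add: span_insert)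
    qed
    moreover have "x \<notin> span E"
      using B_pos[OF x(2)] E(3) unfolding S'_def by simp
    then have "independent (insert x E)"
      using E(2) x(2) by (simp add: independent_insert)
    ultimately show ?thesis
      using E x \<open>A x = l *\<^sub>R x\<close> unfolding S'_def by (intro exI[of _ "insert x E"]) auto
  qed
qed
end

lemma matrix_inv_left:
  fixes P :: "'a::semiring_1^'n^'m"
  assumes "invertible P"
  shows "matrix_inv P ** P = mat 1"
  using someI_ex[OF assms[unfolded invertible_def]] unfolding matrix_inv_def by blast

lemma real_diagonalizable_if_eigenbasis:
  fixes A :: "real^'n^'n"
  assumes E: "independent E" "span E = UNIV"
    and eigen: "\<And>e. e \<in> E \<Longrightarrow> \<exists>l. A *v e = l *\<^sub>R e"
  shows "real_diagonalizable A"
proof -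
  have "finite E" using E(1) independent_bound by blast
  have "card E = dim (UNIV :: (real^'n) set)"
    using E by (intro basis_card_eq_dim) auto
  then have "card (UNIV :: 'n set) = card E"
    by (simp add: dim_UNIV)
  then obtain v where v: "bij_betw v (UNIV :: 'n set) E"
    using finite_same_card_bij[OF finite_class.finite_UNIV \<open>finite E\<close>] by blast
  then have "\<forall>c. \<exists>l. A *v v c = l *\<^sub>R v c"
    using eigen bij_betwE by blast
  then obtain \<mu> where \<mu>: "\<And>c. A *v v c = \<mu> c *\<^sub>R v c"
    by metis
  define P :: "real^'n^'n" where "P = (\<chi> r c. v c $ r)"
  define D :: "real^'n^'n" where "D = (\<chi> i j. if i = j then \<mu> i else 0)"
  have "A ** P = P ** D"
  proof -
    have "(A ** P) $ r $ c = (A *v v c) $ r" for r c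
      by (simp add: matrix_matrix_mult_def matrix_vector_mult_def P_def)
    moreover have "(P ** D) $ r $ c = \<mu> c * v c $ r" for r c
      by (simp add: matrix_matrix_mult_def P_def D_def if_distrib cong: if_cong)
    ultimately show ?thesis by (simp add: vec_eq_iff \<mu>)
  qed
  moreover have "invertible P"
  proof -
    have "P *v axis c 1 = v c" for c
      unfolding matrix_vector_mult_basis P_def column_def by (simp add: vec_eq_iff)
    then have "E \<subseteq> range ((*v) P)"
      using v by (metis bij_betw_imp_surj_on image_subset_iff rangeI)
    then have "span E \<subseteq> range ((*v) P)"
      by (simp add: span_minimal linear_subspace_image)
    then show ?thesis
      using E(2) unfolding invertible_right_inverse matrix_right_invertible_surjective by auto
  qed
  ultimately have "matrix_inv P ** A ** P = D"
    by (metis matrix_inv_left matrix_mul_assoc matrix_mul_lid)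
  then show ?thesis
    unfolding real_diagonalizable_def using \<open>invertible P\<close> D_def by auto
qed

lemma real_diagonalizable_if_self_adjoint:
  fixes A :: "real^'n^'n" and B :: "real^'n \<Rightarrow> real^'n \<Rightarrow> real"
  assumes "bilinear B" "\<And>x y. B x y = B y x" "\<And>x. x \<noteq> 0 \<Longrightarrow> B x x > 0"
    and "\<And>x y. B x (A *v y) = B (A *v x) y"
  shows "real_diagonalizable A"
  using self_adjoint_eigenbasis[OF assms(1-3) matrix_vector_mul_linear assms(4), of UNIV]
  by (auto intro: real_diagonalizable_if_eigenbasis)

lemma real_diagonalizable_if_partially_symmetrized:
  fixes J H :: "real^'n^'n" and I :: "'n set"
  assumes J_rows: "\<And>i j. i \<in> I \<Longrightarrow> J $ i $ j = 0"
    and J_cols: "\<And>i j. i \<in> I \<Longrightarrow> J $ j $ i = 0"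
    and H_sym: "\<And>u v. (H *v u) \<bullet> v = (H *v v) \<bullet> u"
    and H_pos: "\<And>v. v \<noteq> 0 \<Longrightarrow> (\<forall>i\<in>I. v $ i = 0) \<Longrightarrow> v \<bullet> (H *v v) > 0"
    and HJ_sym: "\<And>u v. (H *v u) \<bullet> (J *v v) = (H *v v) \<bullet> (J *v u)"
  shows "real_diagonalizable J"
proof -
  define Q :: "real^'n \<Rightarrow> real^'n" where "Q x = (\<chi> a. if a \<in> I then 0 else x $ a)" for x
  have Q_linear: "linear Q"
    by (auto simp: linear_iff Q_def vec_eq_iff)
  have J_Q: "J *v Q x = J *v x" for x
    unfolding matrix_vector_mult_def Q_def by (auto simp: vec_eq_iff J_cols intro!: sum.cong)
  have Q_J: "Q (J *v x) = J *v x" for x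
    unfolding Q_def by (auto simp: vec_eq_iff matrix_vector_mul_component J_rows inner_vec_def)
  define B where "B x y = (x - Q x) \<bullet> (y - Q y) + Q x \<bullet> (H *v Q y)" for x y
  have "bilinear B"
    unfolding bilinear_def B_def linear_iff
    by (simp add: linear_add[OF Q_linear] linear_scale[OF Q_linear] inner_add_left inner_add_right
        matrix_vector_right_distrib matrix_vector_mult_scaleR algebra_simps)
  moreover have "B x y = B y x" for x y
    unfolding B_def using H_sym[of "Q y" "Q x"] by (simp add: inner_commute)
  moreover have "B x x > 0" if "x \<noteq> 0" for x
  proof (cases "Q x = 0")
    case True
    then show ?thesis using that unfolding B_def by simp
  next
    case False
    then have "Q x \<bullet> (H *v Q x) > 0" by (intro H_pos) (simp_all add: Q_def)
    then show ?thesis unfolding B_def by (simp add: add_nonneg_pos)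
  qed
  moreover have "B x (J *v y) = B (J *v x) y" for x y
  proof -
    have "Q x \<bullet> (H *v (J *v y)) = (H *v Q x) \<bullet> (J *v Q y)"
      using H_sym[of "J *v Q y" "Q x"] by (simp add: J_Q inner_commute)
    also have "\<dots> = (J *v x) \<bullet> (H *v Q y)"
      using HJ_sym[of "Q x" "Q y"] by (simp add: J_Q inner_commute)
    finally show ?thesis unfolding B_def by (simp add: Q_J)
  qed
  ultimately show ?thesis by (rule real_diagonalizable_if_self_adjoint)
qed

theorem lemma3p1:
  fixes f :: "real^'n \<Rightarrow> real^'n"
    and J :: "real^'n \<Rightarrow> real^'n^'n"
    and \<eta> :: "real^'n \<Rightarrow> real"
    and g :: "real^'n \<Rightarrow> real^'n"
    and H :: "real^'n \<Rightarrow> real^'n^'n"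
    and I :: "'n set"
  assumes f_deriv: "\<And>w. (f has_derivative (\<lambda>h. J w *v h)) (at w)"
    and J_diff: "\<And>w. J differentiable (at w)"
    and \<eta>_deriv: "\<And>w. (\<eta> has_derivative (\<lambda>h. g w \<bullet> h)) (at w)"
    and g_deriv: "\<And>w. (g has_derivative (\<lambda>h. H w *v h)) (at w)"
    and f1_zero: "\<And>w i. i \<in> I \<Longrightarrow> f w $ i = 0"
    and f2_indep_w1: "\<And>w i j. i \<in> I \<Longrightarrow> j \<notin> I \<Longrightarrow> J w $ j $ i = 0"
    and \<eta>_convex_w2: "\<And>w v. v \<noteq> 0 \<Longrightarrow> (\<forall>i\<in>I. v $ i = 0) \<Longrightarrow> v \<bullet> (H w *v v) > 0"
    and \<eta>_conserved: "\<And>w h. g w \<bullet> (J w *v h) = 0"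
  shows "hyperbolic f"
proof -
  have J_rows: "J w $ i $ j = 0" if "i \<in> I" for w i j
    using jacobian_row_zero[OF f_deriv] f1_zero[OF that] by blast
  have "real_diagonalizable (J w)" for w
  proof (rule real_diagonalizable_if_partially_symmetrized)
    show "J w $ i $ j = 0" if "i \<in> I" for i j
      using J_rows[OF that] .
    show "J w $ j $ i = 0" if "i \<in> I" for i j
      using J_rows f2_indep_w1 that by (cases "j \<in> I") auto
    show "(H w *v u) \<bullet> v = (H w *v v) \<bullet> u" for u v
      by (rule gradient_derivative_symmetric[OF \<eta>_deriv g_deriv])
    show "(H w *v u) \<bullet> (J w *v v) = (H w *v v) \<bullet> (J w *v u)" for u v
      by (rule conservation_symmetrizes_jacobian[OF f_deriv J_diff g_deriv \<eta>_conserved])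
  qed (rule \<eta>_convex_w2)
  moreover have "frechet_derivative f (at w) = (\<lambda>h. J w *v h)" for w
    using frechet_derivative_at[OF f_deriv] by simp
  ultimately show ?thesis
    unfolding hyperbolic_def using f_deriv by (auto simp: differentiable_def)
qed

end
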